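(* Let $F\in\mathbb{R}[x,y,t,s]$ be square-free, with no factor depending only on $(t,s)$, and such that the leading coefficient of $F$ with respect to $y$ does not depend on $x$. Let $M=\sqrt{D_y(F)}$ and let $R(t,s)$ be the square-free part of $D_x(M)$; assume $R$ is not identically zero and not a polynomial in only one of $t,s$. Write $R(t,s)=\alpha_p(t)s^p+\alpha_{p-1}(t)s^{p-1}+\cdots+\alpha_0(t)$ with $\alpha_p\neq0$. Let $\mathcal{B}$ be the set of real zeros of $D_s(R)$, let $\tilde G(x,y,t)=\sqrt{\mathrm{Res}_s(F,R)}$, let $G$ be obtained from $\tilde G$ by removing its factors depending only on $t$ (assume its leading coefficient with respect to $y$ does not depend on $x$), let $\mathcal{C}$ be a critical set of the one-parameter family $G(x,y,t)=0$, $\mathcal{A}=\mathcal{B}\cup\mathcal{C}$, and let $I\subset\mathbb{R}$ be an open interval with $I\cap\mathcal{A}=\emptyset$. Then there exist $p$ different analytic (possibly complex-valued) functions $\psi_1(t),\dots,\psi_p(t)$, defined on an open complex set containing $I$, such that the zero set of $R(t,s)$ over $I$ (i.e. the set of $(t,s)$ with $t\in I$, $s\in\mathbb{C}$, $R(t,s)=0$) is the union of the zero sets of $s=\psi_k(t)$, $k=1,\dots,p$.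
   Context: For a polynomial $G$ and a variable $w$, $D_w(G):=\mathrm{Res}_w(G,\partial G/\partial w)$, and $\sqrt{G}$ denotes the square-free part of $G$. A finite set $\mathcal{C}\subset\mathbb{R}$ is a critical set of the one-parameter family $G(x,y,t)=0$ if whenever $[t',t'']\cap\mathcal{C}=\emptyset$, the curves $G(x,y,t')=0$ and $G(x,y,t'')=0$ have the same topology type, i.e. there is a homeomorphism of $\mathbb{R}^2$ mapping one real zero set onto the other. *)

theory Defs
  imports "HOL-Analysis.Analysis"
    "HOL-Computational_Algebra.Polynomial_Factorial"
    "HOL-Computational_Algebra.Squarefree"
    "HOL-Computational_Algebra.Field_as_Ring"
    "Subresultants.Resultant_Prelim"
begin

text \<open>Multivariate polynomials are represented as nested univariate polynomials.
  For a nested polynomial the OUTERMOST variable is listed first.  The functions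
  below evaluate such nested polynomials; their arguments are given from the
  outermost variable to the innermost one.\<close>

definition ev2 :: "'a::comm_semiring_0 poly poly \<Rightarrow> 'a \<Rightarrow> 'a \<Rightarrow> 'a" where
  "ev2 P a b = poly (poly P [:a:]) b"

definition ev3 :: "'a::comm_semiring_0 poly poly poly \<Rightarrow> 'a \<Rightarrow> 'a \<Rightarrow> 'a \<Rightarrow> 'a" where
  "ev3 P a b c = poly (poly (poly P [:[:a:]:]) [:b:]) c"

definition ev4 :: "'a::comm_semiring_0 poly poly poly poly \<Rightarrow> 'a \<Rightarrow> 'a \<Rightarrow> 'a \<Rightarrow> 'a \<Rightarrow> 'a" where
  "ev4 P a b c d = poly (poly (poly (poly P [:[:[:a:]:]:]) [:[:b:]:]) [:c:]) d"

text \<open>Discriminant in the sense of the paper: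
  D_w(G) = Res_w(G, dG/dw), where w is the outermost variable of G.\<close>

definition disc :: "'a::{comm_ring_1,semiring_no_zero_divisors} poly \<Rightarrow> 'a" where
  "disc G = resultant G (pderiv G)"

text \<open>H is a square-free part (radical) of P: the product of the distinct
  irreducible factors of P, determined up to a unit.  By convention the
  square-free part of 0 is 0.\<close>

definition is_sqfree_part :: "'a::factorial_semiring \<Rightarrow> 'a \<Rightarrow> bool" where
  "is_sqfree_part H P \<longleftrightarrow>
     (if P = 0 then H = 0 else squarefree H \<and> H dvd P \<and> (\<exists>k. P dvd H ^ k))"

definition same_topology_type :: "(real \<times> real) set \<Rightarrow> (real \<times> real) set \<Rightarrow> bool" where
  "same_topology_type Z1 Z2 \<longleftrightarrow>
     (\<exists>f g. homeomorphism (UNIV :: (real \<times> real) set) UNIV f g \<and> f ` Z1 = Z2)"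

definition critical_set :: "real poly poly poly \<Rightarrow> real set \<Rightarrow> bool" where
  "critical_set G C \<longleftrightarrow> finite C \<and>
     (\<forall>t1 t2. {min t1 t2 .. max t1 t2} \<inter> C = {} \<longrightarrow>
        same_topology_type {(x, y). ev3 G y x t1 = 0} {(x, y). ev3 G y x t2 = 0})"

end

theory Submission
  imports Defs "HOL-Complex_Analysis.Complex_Analysis" "Subresultants.Subresultant_Gcd"
    "HOL-Computational_Algebra.Fundamental_Theorem_Algebra"
begin

text \<open>Only the discriminant hypothesis matters. Away from the complex zeros of \<open>D_s(R)\<close>, which
  are finitely many and none of which lies on \<open>I\<close>, the polynomial \<open>R(t, \<cdot>)\<close> keeps its degree
  \<open>p\<close> and has \<open>p\<close> simple roots. By the holomorphic implicit function theorem (proved with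
  the Banach fixed point theorem, holomorphy passing to the uniform limit of the iterates) the
  roots move holomorphically and locally in disjoint discs, so their graph is a \<open>p\<close>-sheeted
  covering of a convex open neighbourhood of \<open>I\<close> free of such zeros. Lifting through this
  covering from the \<open>p\<close> roots over a point of \<open>I\<close> gives \<open>p\<close> global branches, holomorphic
  because continuous roots of a nondegenerate equation are holomorphic.\<close>

lemma eventually_at_right_zeroE:
  assumes "\<forall>\<^sub>F e in at_right (0::real). P e"
  obtains e where "0 < e" "P e"
  using eventually_happens'[OF trivial_limit_at_right_real
      eventually_conj[OF eventually_at_right_less assms]] by blast

lemma uniform_limit_iterates_of_contractions:
  fixes T :: "'a \<Rightarrow> 'b::metric_space \<Rightarrow> 'b"
  assumes e: "0 \<le> e" and k: "0 \<le> k" "k < 1"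
    and maps: "\<And>t s. t \<in> V \<Longrightarrow> s \<in> cball s0 e \<Longrightarrow> T t s \<in> cball s0 e"
    and contraction: "\<And>t x y. t \<in> V \<Longrightarrow> x \<in> cball s0 e \<Longrightarrow> y \<in> cball s0 e \<Longrightarrow>
                         dist (T t x) (T t y) \<le> k * dist x y"
    and fixpoint: "\<And>t. t \<in> V \<Longrightarrow> r t \<in> cball s0 e \<and> T t (r t) = r t"
  shows "uniform_limit V (\<lambda>n t. (T t ^^ n) s0) r sequentially"
proof (rule uniform_limitI)
  define X where "X n t = (T t ^^ n) s0" for n t
  have X_in: "X n t \<in> cball s0 e" if "t \<in> V" for n t
    by (induction n) (use e maps[OF that] in \<open>auto simp: X_def\<close>)
  have X_close: "dist (X n t) (r t) \<le> k ^ n * e" if t: "t \<in> V" for n t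
  proof (induction n)
    case 0
    then show ?case using fixpoint[OF t] by (simp add: X_def dist_commute)
  next
    case (Suc n)
    have "dist (X (Suc n) t) (r t) = dist (T t (X n t)) (T t (r t))"
      using fixpoint[OF t] by (simp add: X_def)
    also have "\<dots> \<le> k * dist (X n t) (r t)"
      using contraction[OF t X_in[OF t] conjunct1[OF fixpoint[OF t]]] .
    also have "\<dots> \<le> k ^ Suc n * e"
      using mult_left_mono[OF Suc k(1)] by (simp add: mult.assoc)
    finally show ?case .
  qed
  fix \<epsilon> :: real assume "0 < \<epsilon>"
  have "(\<lambda>n. k ^ n * e) \<longlonglongrightarrow> 0"
    using k by (intro tendsto_mult_left_zero LIMSEQ_power_zero) simp
  then have "\<forall>\<^sub>F n in sequentially. k ^ n * e < \<epsilon>"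
    using \<open>0 < \<epsilon>\<close> by (rule order_tendstoD)
  then show "\<forall>\<^sub>F n in sequentially. \<forall>t\<in>V. dist ((T t ^^ n) s0) (r t) < \<epsilon>"
    by eventually_elim (use X_close[unfolded X_def] in \<open>blast intro: le_less_trans\<close>)
qed

lemma holomorphic_fixpoint_of_contractions:
  fixes T :: "complex \<Rightarrow> complex \<Rightarrow> complex"
  assumes V: "open V" and e: "0 \<le> e" and k: "0 \<le> k" "k < 1"
    and maps: "\<And>t s. t \<in> V \<Longrightarrow> s \<in> cball s0 e \<Longrightarrow> T t s \<in> cball s0 e"
    and contraction: "\<And>t x y. t \<in> V \<Longrightarrow> x \<in> cball s0 e \<Longrightarrow> y \<in> cball s0 e \<Longrightarrow>
                         dist (T t x) (T t y) \<le> k * dist x y"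
    and hol: "\<And>h. h holomorphic_on V \<Longrightarrow> (\<lambda>t. T t (h t)) holomorphic_on V"
  obtains r where "r holomorphic_on V" "\<And>t. t \<in> V \<Longrightarrow> r t \<in> cball s0 e \<and> T t (r t) = r t"
proof -
  have "\<exists>!x\<in>cball s0 e. T t x = x" if t: "t \<in> V" for t
    by (rule Banach_fix[OF _ _ k]) (use e maps[OF t] contraction[OF t] in \<open>auto simp: complete_eq_closed\<close>)
  then obtain r where r: "\<And>t. t \<in> V \<Longrightarrow> r t \<in> cball s0 e \<and> T t (r t) = r t"
    by metis
  have iterates_hol: "(\<lambda>t. (T t ^^ n) s0) holomorphic_on V" for n
    by (induction n) (simp_all add: hol)
  have limit: "uniform_limit V (\<lambda>n t. (T t ^^ n) s0) r sequentially"
    by (rule uniform_limit_iterates_of_contractions[OF e k maps contraction r])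
  have "r holomorphic_on V"
  proof (rule holomorphic_uniform_sequence[OF V iterates_hol])
    fix t assume "t \<in> V"
    then obtain d where "0 < d" "cball t d \<subseteq> V" using V open_contains_cball by blast
    with uniform_limit_on_subset[OF limit]
    show "\<exists>d>0. cball t d \<subseteq> V \<and> uniform_limit (cball t d) (\<lambda>n t. (T t ^^ n) s0) r sequentially"
      by blast
  qed
  with r show ?thesis using that by blast
qed

lemma holomorphic_root_of_newton_contraction:
  fixes f f' :: "complex \<Rightarrow> complex \<Rightarrow> complex"
  assumes hol: "\<And>h A. h holomorphic_on A \<Longrightarrow> (\<lambda>t. f t (h t)) holomorphic_on A"
    and deriv: "\<And>t s. (f t has_field_derivative f' t s) (at s)"
    and c: "c \<noteq> 0" and e: "0 < e"
    and slope: "\<And>t s. t \<in> ball t0 \<delta> \<Longrightarrow> s \<in> cball s0 e \<Longrightarrow> norm (1 - f' t s / c) \<le> 1/2"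
    and small: "\<And>t. t \<in> ball t0 \<delta> \<Longrightarrow> norm (f t s0) < norm c * e / 4"
  obtains r where "r holomorphic_on ball t0 \<delta>"
    "\<forall>t\<in>ball t0 \<delta>. r t \<in> ball s0 e \<and> f t (r t) = 0 \<and>
            (\<forall>s\<in>ball s0 e. f t s = 0 \<longrightarrow> s = r t)"
proof -
  define T where "T t s = s - f t s / c" for t s
  have fixpoint_iff: "T t s = s \<longleftrightarrow> f t s = 0" for t s using c by (simp add: T_def)
  have lipschitz: "dist (T t x) (T t y) \<le> 1/2 * dist x y"
    if t: "t \<in> ball t0 \<delta>" and xy: "x \<in> cball s0 e" "y \<in> cball s0 e" for t x y
    unfolding dist_norm
  proof (rule field_differentiable_bound[where S="cball s0 e" and f'="\<lambda>z. 1 - f' t z / c"])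
    fix z assume z: "z \<in> cball s0 e"
    show "(T t has_field_derivative 1 - f' t z / c) (at z within cball s0 e)"
      unfolding T_def by (rule has_field_derivative_at_within)
        (use c in \<open>auto intro!: derivative_eq_intros deriv\<close>)
    show "norm (1 - f' t z / c) \<le> 1/2" using slope[OF t z] .
  qed (use xy in auto)
  have maps: "T t s \<in> cball s0 (e/2)" if t: "t \<in> ball t0 \<delta>" and s: "s \<in> cball s0 (e/2)" for t s
  proof -
    have "dist (T t s) (T t s0) \<le> e/4"
      using lipschitz[OF t, of s s0] s e by (auto simp: dist_commute)
    moreover have "dist (T t s0) s0 < e/4"
      using small[OF t] c by (simp add: T_def dist_norm norm_divide field_simps)
    ultimately show ?thesis
      using dist_triangle[of s0 "T t s" "T t s0"] by (simp add: dist_commute)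
  qed
  obtain r where r_hol: "r holomorphic_on ball t0 \<delta>"
    and r: "\<And>t. t \<in> ball t0 \<delta> \<Longrightarrow> r t \<in> cball s0 (e/2) \<and> T t (r t) = r t"
  proof (rule holomorphic_fixpoint_of_contractions[where k="1/2"])
    show "\<And>t x y. t \<in> ball t0 \<delta> \<Longrightarrow> x \<in> cball s0 (e/2) \<Longrightarrow> y \<in> cball s0 (e/2) \<Longrightarrow>
            dist (T t x) (T t y) \<le> 1/2 * dist x y"
      using lipschitz e by auto
    show "\<And>h. h holomorphic_on ball t0 \<delta> \<Longrightarrow> (\<lambda>t. T t (h t)) holomorphic_on ball t0 \<delta>"
      unfolding T_def using c by (intro holomorphic_intros hol)
  qed (use e maps in auto)
  show ?thesis
  proof (rule that[OF r_hol], intro ballI conjI impI)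
    fix t assume t: "t \<in> ball t0 \<delta>"
    show "r t \<in> ball s0 e" "f t (r t) = 0" using r[OF t] e fixpoint_iff by auto
    fix s assume s: "s \<in> ball s0 e" "f t s = 0"
    have "T t s = s" "T t (r t) = r t" using s(2) r[OF t] fixpoint_iff by auto
    then have "dist s (r t) = dist (T t s) (T t (r t))" by simp
    also have "\<dots> \<le> 1/2 * dist s (r t)"
      using lipschitz[OF t, of s "r t"] s(1) r[OF t] e by auto
    finally show "s = r t" by simp
  qed
qed

lemma holomorphic_implicit_function:
  fixes f f' :: "complex \<Rightarrow> complex \<Rightarrow> complex"
  assumes hol: "\<And>h A. h holomorphic_on A \<Longrightarrow> (\<lambda>t. f t (h t)) holomorphic_on A"
    and deriv: "\<And>t s. (f t has_field_derivative f' t s) (at s)"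
    and cont: "continuous_on UNIV (\<lambda>(t, s). f' t s)"
    and root: "f t0 s0 = 0" and nonsingular: "f' t0 s0 \<noteq> 0"
  shows "\<forall>\<^sub>F e in at_right 0. \<exists>\<delta>>0. \<exists>r. r holomorphic_on ball t0 \<delta> \<and>
           (\<forall>t\<in>ball t0 \<delta>. r t \<in> ball s0 e \<and> f t (r t) = 0 \<and>
              (\<forall>s\<in>ball s0 e. f t s = 0 \<longrightarrow> s = r t))"
proof -
  define c where "c = f' t0 s0"
  have c: "c \<noteq> 0" using nonsingular by (simp add: c_def)
  have "continuous (at (t0, s0)) (\<lambda>(t, s). f' t s)"
    using cont by (simp add: continuous_on_eq_continuous_at)
  from this[unfolded continuous_at_eps_delta, rule_format, of "norm c / 2"]
  obtain \<rho> where \<rho>: "\<rho> > 0"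
    and near: "\<And>t s. dist (t, s) (t0, s0) < \<rho> \<Longrightarrow> dist (f' t s) c < norm c / 2"
    using c by (auto simp: c_def)
  have slope: "norm (1 - f' t s / c) \<le> 1/2" if "dist t t0 < \<rho>/2" "dist s s0 < \<rho>/2" for t s
  proof -
    have "dist (t, s) (t0, s0) < \<rho>"
      using that by (simp add: dist_Pair_Pair sqrt_sum_squares_half_less)
    then have "norm (c - f' t s) < norm c / 2"
      using near by (simp add: dist_norm norm_minus_commute)
    moreover have "1 - f' t s / c = (c - f' t s) / c" using c by (simp add: field_simps)
    ultimately show ?thesis using c by (simp add: norm_divide divide_simps)
  qed
  show ?thesis
    unfolding eventually_at_right_field
  proof (rule exI[of _ "\<rho>/4"], intro conjI allI impI)
    show "0 < \<rho>/4" using \<rho> by simp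
    fix e :: real assume e: "0 < e" "e < \<rho>/4"
    have "continuous (at t0) (\<lambda>t. f t s0)"
      using holomorphic_on_imp_continuous_on[OF hol[OF holomorphic_on_const, of s0 UNIV]]
      by (simp add: continuous_on_eq_continuous_at)
    from this[unfolded continuous_at_eps_delta, rule_format, of "norm c * e / 4"]
    obtain \<delta>' where \<delta>': "\<delta>' > 0" "\<And>t. dist t t0 < \<delta>' \<Longrightarrow> norm (f t s0) < norm c * e / 4"
      using c e by (auto simp: root dist_norm)
    define \<delta> where "\<delta> = min (\<rho>/2) \<delta>'"
    have slope': "norm (1 - f' t s / c) \<le> 1/2" if "t \<in> ball t0 \<delta>" "s \<in> cball s0 e" for t s
      using that e by (intro slope) (auto simp: \<delta>_def dist_commute)
    have small: "norm (f t s0) < norm c * e / 4" if "t \<in> ball t0 \<delta>" for t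
      using that \<delta>'(2) by (simp add: \<delta>_def dist_commute)
    obtain r where "r holomorphic_on ball t0 \<delta>"
      "\<forall>t\<in>ball t0 \<delta>. r t \<in> ball s0 e \<and> f t (r t) = 0 \<and>
              (\<forall>s\<in>ball s0 e. f t s = 0 \<longrightarrow> s = r t)"
      by (rule holomorphic_root_of_newton_contraction[OF hol deriv c e(1) slope' small])
    moreover have "0 < \<delta>" using \<rho> \<delta>' by (simp add: \<delta>_def)
    ultimately show "\<exists>\<delta>>0. \<exists>r. r holomorphic_on ball t0 \<delta> \<and>
           (\<forall>t\<in>ball t0 \<delta>. r t \<in> ball s0 e \<and> f t (r t) = 0 \<and>
              (\<forall>s\<in>ball s0 e. f t s = 0 \<longrightarrow> s = r t))"
      by blast
  qed
qed

lemma (in comm_ring_hom) resultant_eq_0_if_lead_coeffs_vanish: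
  assumes "hom (lead_coeff p) = 0" "hom (lead_coeff q) = 0" "0 < degree p + degree q"
  shows "hom (resultant p q) = 0"
proof -
  define S where "S = map_mat hom (sylvester_mat p q)"
  define n where "n = degree p + degree q"
  have S: "S \<in> carrier_mat n n" using sylvester_carrier_mat[of p q] by (simp add: S_def n_def)
  \<comment> \<open>The first column of the Sylvester matrix holds the two leading coefficients and zeros.\<close>
  have first_column: "S $$ (i, 0) = 0" if "i < n" for i
    using that assms by (simp add: S_def n_def sylvester_index_mat)
  have "det S = 0"
    unfolding det_col[OF S]
  proof (rule sum.neutral, intro ballI)
    fix \<pi> assume "\<pi> \<in> {\<pi>. \<pi> permutes {0..<n}}"
    then have "\<pi> 0 < n" using assms by (auto simp: n_def dest: permutes_in_image)
    then have "(\<Prod>j<n. S $$ (\<pi> j, j)) = 0"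
      using assms(3) first_column by (intro prod_zero[OF _ bexI[of _ 0]]) (auto simp: n_def)
    then show "of_int (sign \<pi>) * (\<Prod>j<n. S $$ (\<pi> j, j)) = 0" by simp
  qed
  then show ?thesis by (simp add: S_def resultant_def hom_det)
qed

lemma resultant_ne_0_imp_no_common_root:
  fixes p q :: "'a :: {semiring_gcd_mult_normalize, factorial_ring_gcd} poly"
  assumes "resultant p q \<noteq> 0" "p \<noteq> 0"
  shows "\<not> (poly p s = 0 \<and> poly q s = 0)"
proof
  assume "poly p s = 0 \<and> poly q s = 0"
  then have "[:-s, 1:] dvd gcd p q" by (simp add: poly_eq_0_iff_dvd)
  moreover have "gcd p q \<noteq> 0" using assms(2) by simp
  ultimately have "degree [:-s, 1:] \<le> degree (gcd p q)" by (rule dvd_imp_degree_le)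
  with assms(1) show False by (simp add: resultant_0_gcd)
qed

definition partial_eval :: "real poly poly \<Rightarrow> complex \<Rightarrow> complex poly" where
  "partial_eval R z = map_poly (\<lambda>a. poly (map_poly of_real a) z) R"

lemma idom_hom_poly_of_real: "idom_hom (\<lambda>a :: real poly. poly (map_poly complex_of_real a) z)"
proof -
  interpret of_real: map_poly_inj_idom_hom "of_real :: real \<Rightarrow> complex" ..
  show ?thesis by unfold_locales (simp_all add: of_real.hom_mult of_real.hom_add)
qed

lemma partial_eval_pderiv: "partial_eval (pderiv R) z = pderiv (partial_eval R z)"
proof -
  interpret idom_hom "\<lambda>a :: real poly. poly (map_poly complex_of_real a) z"
    by (rule idom_hom_poly_of_real)
  show ?thesis by (simp add: partial_eval_def map_poly_pderiv)
qed

lemma poly_partial_eval: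
  "poly (partial_eval R z) s = (\<Sum>i\<le>degree R. poly (map_poly of_real (coeff R i)) z * s ^ i)"
proof -
  have "degree (partial_eval R z) \<le> degree R"
    by (simp add: partial_eval_def degree_map_poly_le)
  then have "poly (partial_eval R z) s =
      poly (\<Sum>i\<le>degree R. monom (coeff (partial_eval R z) i) i) s"
    by (simp add: poly_as_sum_of_monoms')
  then show ?thesis
    by (simp add: poly_sum poly_monom partial_eval_def coeff_map_poly)
qed

lemma continuous_on_poly_partial_eval:
  "continuous_on UNIV (\<lambda>(z, s). poly (partial_eval R z) s)"
  unfolding poly_partial_eval case_prod_unfold
  by (intro continuous_intros continuous_on_compose2[OF continuous_on_poly[OF continuous_on_id]]) auto

lemma holomorphic_on_poly_partial_eval:
  "h holomorphic_on A \<Longrightarrow> (\<lambda>z. poly (partial_eval R z) (h z)) holomorphic_on A"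
  unfolding poly_partial_eval by (intro holomorphic_intros)

lemma ev2_map_of_real_eq_poly_partial_eval:
  "ev2 (map_poly (map_poly complex_of_real) R) s z = poly (partial_eval R z) s"
proof (induction R)
  case (pCons a R)
  have "map_poly (map_poly complex_of_real) (pCons a R) =
      pCons (map_poly of_real a) (map_poly (map_poly of_real) R)"
    by (cases "a = 0 \<and> R = 0") (auto simp: map_poly_pCons)
  moreover have "partial_eval (pCons a R) z = pCons (poly (map_poly of_real a) z) (partial_eval R z)"
    by (cases "a = 0 \<and> R = 0") (auto simp: partial_eval_def map_poly_pCons)
  ultimately show ?case using pCons by (simp add: ev2_def)
qed (simp add: ev2_def partial_eval_def)

definition nondegenerate_at :: "real poly poly \<Rightarrow> complex \<Rightarrow> bool" where
  "nondegenerate_at R z \<longleftrightarrow> degree (partial_eval R z) = degree R \<and> rsquarefree (partial_eval R z)"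

lemma nondegenerate_atI:
  assumes p: "0 < degree R"
    and disc: "poly (map_poly complex_of_real (resultant R (pderiv R))) z \<noteq> 0"
  shows "nondegenerate_at R z"
proof -
  let ?h = "\<lambda>a :: real poly. poly (map_poly complex_of_real a) z"
  let ?P = "partial_eval R z"
  interpret h: idom_hom ?h by (rule idom_hom_poly_of_real)
  have lead_pderiv: "lead_coeff (pderiv R) = of_nat (degree R) * lead_coeff R"
    using p by (simp add: degree_pderiv coeff_pderiv)
  have lead: "?h (lead_coeff R) \<noteq> 0"
  proof
    assume "?h (lead_coeff R) = 0"
    then have "?h (resultant R (pderiv R)) = 0"
      using p by (intro h.resultant_eq_0_if_lead_coeffs_vanish) (simp_all add: lead_pderiv h.hom_mult)
    with disc show False by simp
  qed
  then have deg: "degree ?P = degree R"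
    and deg': "degree (map_poly ?h (pderiv R)) = degree (pderiv R)"
    using lead_pderiv p by (simp_all add: partial_eval_def map_poly_degree_eq h.hom_mult h.hom_of_nat)
  have "resultant ?P (pderiv ?P) \<noteq> 0"
    using h.resultant_map_poly[OF deg[unfolded partial_eval_def] deg'] disc
    by (simp add: partial_eval_def h.map_poly_pderiv)
  moreover have "?P \<noteq> 0" using deg p by auto
  ultimately have "\<not> (poly ?P s = 0 \<and> poly (pderiv ?P) s = 0)" for s
    by (rule resultant_ne_0_imp_no_common_root)
  with deg show ?thesis by (simp add: nondegenerate_at_def rsquarefree_roots)
qed

lemma card_roots_partial_eval:
  assumes "nondegenerate_at R z" "0 < degree R"
  shows "finite {s. poly (partial_eval R z) s = 0}" "card {s. poly (partial_eval R z) s = 0} = degree R"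
proof -
  let ?P = "partial_eval R z"
  have P: "?P \<noteq> 0" "rsquarefree ?P" "degree ?P = degree R"
    using assms by (auto simp: nondegenerate_at_def)
  show "finite {s. poly ?P s = 0}" using P(1) by (rule poly_roots_finite)
  have "degree ?P = degree (\<Prod>s | poly ?P s = 0. [:-s, 1:])"
    using complex_poly_decompose_rsquarefree[OF P(2)] P(1) by (metis degree_smult_eq leading_coeff_0_iff)
  also have "\<dots> = card {s. poly ?P s = 0}"
    by (subst degree_prod_eq_sum_degree) auto
  finally show "card {s. poly ?P s = 0} = degree R" using P(3) by simp
qed

lemma roots_partial_eval_eq_image:
  assumes nondeg: "nondegenerate_at R z" and p: "0 < degree R"
    and inj: "inj_on f A" and card: "card A = degree R"
    and sub: "f ` A \<subseteq> {s. poly (partial_eval R z) s = 0}"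
  shows "{s. poly (partial_eval R z) s = 0} = f ` A"
proof -
  have "card (f ` A) = card {s. poly (partial_eval R z) s = 0}"
    using card_image[OF inj] card card_roots_partial_eval(2)[OF nondeg p] by simp
  from card_subset_eq[OF card_roots_partial_eval(1)[OF nondeg p] sub this] show ?thesis by simp
qed

lemma partial_eval_implicit_function:
  assumes "poly (partial_eval R t0) s0 = 0" "poly (pderiv (partial_eval R t0)) s0 \<noteq> 0"
  shows "\<forall>\<^sub>F e in at_right 0. \<exists>\<delta>>0. \<exists>r. r holomorphic_on ball t0 \<delta> \<and>
           (\<forall>t\<in>ball t0 \<delta>. r t \<in> ball s0 e \<and> poly (partial_eval R t) (r t) = 0 \<and>
              (\<forall>s\<in>ball s0 e. poly (partial_eval R t) s = 0 \<longrightarrow> s = r t))"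
  using assms
  by (intro holomorphic_implicit_function[where f'="\<lambda>t. poly (partial_eval (pderiv R) t)"]
      holomorphic_on_poly_partial_eval continuous_on_poly_partial_eval)
    (simp_all add: partial_eval_pderiv poly_DERIV)

lemma holomorphic_on_continuous_root:
  assumes U: "open U" and cont: "continuous_on U \<psi>"
    and root: "\<And>z. z \<in> U \<Longrightarrow> poly (partial_eval R z) (\<psi> z) = 0"
    and simple: "\<And>z. z \<in> U \<Longrightarrow> poly (pderiv (partial_eval R z)) (\<psi> z) \<noteq> 0"
  shows "\<psi> holomorphic_on U"
  unfolding holomorphic_on_def
proof
  fix z0 assume z0: "z0 \<in> U"
  from partial_eval_implicit_function[OF root[OF z0] simple[OF z0]]
  obtain e where "0 < e" and "\<exists>\<delta>>0. \<exists>r. r holomorphic_on ball z0 \<delta> \<and>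
      (\<forall>t\<in>ball z0 \<delta>. r t \<in> ball (\<psi> z0) e \<and> poly (partial_eval R t) (r t) = 0 \<and>
         (\<forall>s\<in>ball (\<psi> z0) e. poly (partial_eval R t) s = 0 \<longrightarrow> s = r t))"
    by (rule eventually_at_right_zeroE)
  then obtain \<delta> r where \<delta>: "0 < \<delta>" and r_hol: "r holomorphic_on ball z0 \<delta>"
    and unique: "\<forall>t\<in>ball z0 \<delta>. \<forall>s\<in>ball (\<psi> z0) e. poly (partial_eval R t) s = 0 \<longrightarrow> s = r t"
    by blast
  obtain \<delta>' where \<delta>': "0 < \<delta>'" "\<And>z. z \<in> U \<Longrightarrow> dist z z0 < \<delta>' \<Longrightarrow> dist (\<psi> z) (\<psi> z0) < e"
    using cont z0 \<open>0 < e\<close> unfolding continuous_on_iff by blast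
  have "r field_differentiable at z0"
    using holomorphic_on_imp_differentiable_at[OF r_hol open_ball] \<delta> by simp
  then have r_diff: "r field_differentiable at z0 within U" by (rule field_differentiable_at_within)
  show "\<psi> field_differentiable at z0 within U"
  proof (rule field_differentiable_transform_within[where d="min \<delta> \<delta>'" and f=r])
    fix z assume z: "z \<in> U" "dist z z0 < min \<delta> \<delta>'"
    then have "z \<in> ball z0 \<delta>" "\<psi> z \<in> ball (\<psi> z0) e" using \<delta>'(2)[OF z(1)] by (auto simp: dist_commute)
    then show "r z = \<psi> z" using unique root[OF z(1)] by auto
  qed (use \<delta> \<delta>' z0 r_diff in auto)
qed

lemma eventually_disjoint_balls:
  fixes Z :: "'a::metric_space set"
  assumes "finite Z"
  shows "\<forall>\<^sub>F e in at_right 0. \<forall>r\<in>Z. \<forall>r'\<in>Z. r \<noteq> r' \<longrightarrow> ball r e \<inter> ball r' e = {}"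
proof (intro eventually_ball_finite assms ballI)
  fix r r' assume "r \<in> Z" "r' \<in> Z"
  show "\<forall>\<^sub>F e in at_right 0. r \<noteq> r' \<longrightarrow> ball r e \<inter> ball r' e = {}"
  proof (cases "r = r'")
    case False
    then have "\<forall>\<^sub>F e in at_right 0. e < dist r r' / 2"
      by (intro order_tendstoD(2)[OF tendsto_ident_at]) simp
    then show ?thesis by (rule eventually_mono) (simp add: disjoint_ballI)
  qed simp
qed

lemma finite_choice_common_radius:
  fixes \<delta>0 :: real
  assumes Z: "finite Z" and \<delta>0: "0 < \<delta>0"
    and ex: "\<And>r. r \<in> Z \<Longrightarrow> \<exists>\<delta>>0. \<exists>x. P r \<delta> x"
    and shrink: "\<And>r \<delta> \<delta>' x. P r \<delta> x \<Longrightarrow> 0 < \<delta>' \<Longrightarrow> \<delta>' \<le> \<delta> \<Longrightarrow> P r \<delta>' x"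
  obtains \<delta> x where "0 < \<delta>" "\<delta> \<le> \<delta>0" "\<forall>r\<in>Z. P r \<delta> (x r)"
proof -
  obtain \<delta>r where \<delta>r: "\<forall>r\<in>Z. 0 < \<delta>r r \<and> (\<exists>x. P r (\<delta>r r) x)"
    using bchoice[of Z "\<lambda>r \<delta>. 0 < \<delta> \<and> (\<exists>x. P r \<delta> x)"] ex by blast
  then obtain x where x: "\<forall>r\<in>Z. P r (\<delta>r r) (x r)"
    using bchoice[of Z "\<lambda>r x. P r (\<delta>r r) x"] by blast
  define \<delta> where "\<delta> = Min (insert \<delta>0 (\<delta>r ` Z))"
  have "0 < \<delta>" "\<delta> \<le> \<delta>0" "\<And>r. r \<in> Z \<Longrightarrow> \<delta> \<le> \<delta>r r"
    using Z \<delta>0 \<delta>r by (auto simp: \<delta>_def)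
  with x shrink show ?thesis using that by blast
qed

lemma local_root_branches:
  assumes p: "0 < degree R" and S: "open S" "z0 \<in> S"
    and nondeg: "\<And>z. z \<in> S \<Longrightarrow> nondegenerate_at R z"
  defines "Z \<equiv> {s. poly (partial_eval R z0) s = 0}"
  obtains \<delta> \<epsilon> \<rho> where "0 < \<delta>" "ball z0 \<delta> \<subseteq> S"
    "\<And>r r'. r \<in> Z \<Longrightarrow> r' \<in> Z \<Longrightarrow> r \<noteq> r' \<Longrightarrow> ball r \<epsilon> \<inter> ball r' \<epsilon> = {}"
    "\<And>r. r \<in> Z \<Longrightarrow> continuous_on (ball z0 \<delta>) (\<rho> r)"
    "\<And>r t. r \<in> Z \<Longrightarrow> t \<in> ball z0 \<delta> \<Longrightarrow> \<rho> r t \<in> ball r \<epsilon>"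
    "\<And>t. t \<in> ball z0 \<delta> \<Longrightarrow> {s. poly (partial_eval R t) s = 0} = (\<lambda>r. \<rho> r t) ` Z"
proof -
  have finZ: "finite Z" and cardZ: "card Z = degree R"
    using card_roots_partial_eval[OF nondeg[OF S(2)] p] by (simp_all add: Z_def)
  have simple: "poly (pderiv (partial_eval R z0)) r \<noteq> 0" if "r \<in> Z" for r
    using nondeg[OF S(2)] that by (auto simp: Z_def nondegenerate_at_def rsquarefree_roots)
  define branch where "branch r e \<delta> \<rho> \<longleftrightarrow> continuous_on (ball z0 \<delta>) \<rho> \<and>
      (\<forall>t\<in>ball z0 \<delta>. \<rho> t \<in> ball r e \<and> poly (partial_eval R t) (\<rho> t) = 0)" for r e \<delta> \<rho>
  have "\<forall>\<^sub>F e in at_right 0. \<forall>r\<in>Z. \<exists>\<delta>>0. \<exists>\<rho>. branch r e \<delta> \<rho>"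
  proof (rule eventually_ball_finite[OF finZ], intro ballI)
    fix r assume r: "r \<in> Z"
    show "\<forall>\<^sub>F e in at_right 0. \<exists>\<delta>>0. \<exists>\<rho>. branch r e \<delta> \<rho>"
      using partial_eval_implicit_function[of R z0 r] r simple[OF r]
      by (auto simp: Z_def branch_def elim!: eventually_mono intro: holomorphic_on_imp_continuous_on)
  qed
  then have "\<forall>\<^sub>F e in at_right 0. (\<forall>r\<in>Z. \<exists>\<delta>>0. \<exists>\<rho>. branch r e \<delta> \<rho>) \<and>
      (\<forall>r\<in>Z. \<forall>r'\<in>Z. r \<noteq> r' \<longrightarrow> ball r e \<inter> ball r' e = {})"
    using eventually_disjoint_balls[OF finZ] by (rule eventually_conj)
  then obtain \<epsilon> where "0 < \<epsilon>" and "(\<forall>r\<in>Z. \<exists>\<delta>>0. \<exists>\<rho>. branch r \<epsilon> \<delta> \<rho>) \<and>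
      (\<forall>r\<in>Z. \<forall>r'\<in>Z. r \<noteq> r' \<longrightarrow> ball r \<epsilon> \<inter> ball r' \<epsilon> = {})"
    by (rule eventually_at_right_zeroE)
  then have branch_ex: "\<And>r. r \<in> Z \<Longrightarrow> \<exists>\<delta>>0. \<exists>\<rho>. branch r \<epsilon> \<delta> \<rho>"
    and disjoint: "\<And>r r'. r \<in> Z \<Longrightarrow> r' \<in> Z \<Longrightarrow> r \<noteq> r' \<Longrightarrow> ball r \<epsilon> \<inter> ball r' \<epsilon> = {}"
    by auto
  have shrink: "branch r \<epsilon> \<delta>' \<rho>" if "branch r \<epsilon> \<delta> \<rho>" "0 < \<delta>'" "\<delta>' \<le> \<delta>" for r \<delta> \<delta>' \<rho>
    using that by (auto simp: branch_def intro: continuous_on_subset)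
  obtain \<delta>S where \<delta>S: "0 < \<delta>S" "ball z0 \<delta>S \<subseteq> S" using S openE by blast
  obtain \<delta> \<rho> where \<delta>: "0 < \<delta>" "\<delta> \<le> \<delta>S" and branches: "\<forall>r\<in>Z. branch r \<epsilon> \<delta> (\<rho> r)"
    by (rule finite_choice_common_radius[where P="\<lambda>r \<delta> \<rho>. branch r \<epsilon> \<delta> \<rho>",
          OF finZ \<delta>S(1) branch_ex shrink])
  then have branch: "branch r \<epsilon> \<delta> (\<rho> r)" if "r \<in> Z" for r using that by blast
  have ball_S: "ball z0 \<delta> \<subseteq> S" using \<delta>(2) \<delta>S(2) by auto
  show ?thesis
  proof (rule that[OF \<delta>(1) ball_S disjoint])
    show "\<And>r. r \<in> Z \<Longrightarrow> continuous_on (ball z0 \<delta>) (\<rho> r)"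
      "\<And>r t. r \<in> Z \<Longrightarrow> t \<in> ball z0 \<delta> \<Longrightarrow> \<rho> r t \<in> ball r \<epsilon>"
      using branch by (auto simp: branch_def)
    fix t assume t: "t \<in> ball z0 \<delta>"
    have inj: "inj_on (\<lambda>r. \<rho> r t) Z"
    proof (rule inj_onI)
      fix r r' assume r: "r \<in> Z" "r' \<in> Z" and eq: "\<rho> r t = \<rho> r' t"
      have "\<rho> r t \<in> ball r \<epsilon>" "\<rho> r' t \<in> ball r' \<epsilon>"
        using branch[OF r(1)] branch[OF r(2)] t by (simp_all add: branch_def)
      then have "\<rho> r t \<in> ball r \<epsilon> \<inter> ball r' \<epsilon>" using eq by simp
      then show "r = r'" using disjoint[OF r] by blast
    qed
    have sub: "(\<lambda>r. \<rho> r t) ` Z \<subseteq> {s. poly (partial_eval R t) s = 0}"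
      using branch t by (auto simp: branch_def)
    have "t \<in> S" using t ball_S by blast
    from roots_partial_eval_eq_image[OF nondeg[OF this] p inj cardZ sub]
    show "{s. poly (partial_eval R t) s = 0} = (\<lambda>r. \<rho> r t) ` Z" .
  qed
qed

lemma evenly_covered_by_graphs:
  fixes \<rho> :: "'i \<Rightarrow> 'a::topological_space \<Rightarrow> 'b::topological_space"
  assumes T: "open T" and B: "\<And>r. r \<in> Z \<Longrightarrow> open (B r)"
    and disjoint: "\<And>r r'. r \<in> Z \<Longrightarrow> r' \<in> Z \<Longrightarrow> r \<noteq> r' \<Longrightarrow> B r \<inter> B r' = {}"
    and cont: "\<And>r. r \<in> Z \<Longrightarrow> continuous_on T (\<rho> r)"
    and in_B: "\<And>r t. r \<in> Z \<Longrightarrow> t \<in> T \<Longrightarrow> \<rho> r t \<in> B r"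
    and fibre: "\<And>t. t \<in> T \<Longrightarrow> {s. (t, s) \<in> C} = (\<lambda>r. \<rho> r t) ` Z"
  shows "\<exists>v. \<Union>v = C \<inter> fst -` T \<and> (\<forall>u\<in>v. openin (top_of_set C) u) \<and>
             pairwise disjnt v \<and> (\<forall>u\<in>v. \<exists>q. homeomorphism u T fst q)"
proof (intro exI conjI)
  let ?v = "(\<lambda>r. C \<inter> (T \<times> B r)) ` Z"
  have sheet: "C \<inter> (T \<times> B r) = (\<lambda>t. (t, \<rho> r t)) ` T" if r: "r \<in> Z" for r
  proof (intro equalityI subsetI)
    fix x assume x: "x \<in> C \<inter> (T \<times> B r)"
    then obtain t s where xts: "x = (t, s)" and t: "t \<in> T" and s: "s \<in> B r" and "(t, s) \<in> C"
      by auto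
    then obtain r' where r': "r' \<in> Z" "s = \<rho> r' t" using fibre[OF t] by auto
    have "s \<in> B r \<inter> B r'" using s r' in_B[OF r'(1) t] by simp
    then have "r' = r" using disjoint[OF r'(1) r] by blast
    then show "x \<in> (\<lambda>t. (t, \<rho> r t)) ` T" using xts r' t by simp
  next
    fix x assume "x \<in> (\<lambda>t. (t, \<rho> r t)) ` T"
    then obtain t where x: "x = (t, \<rho> r t)" and t: "t \<in> T" by auto
    then show "x \<in> C \<inter> (T \<times> B r)" using fibre[OF t] r in_B[OF r t] by auto
  qed
  show "\<Union>?v = C \<inter> fst -` T"
  proof (intro equalityI subsetI)
    fix x assume "x \<in> C \<inter> fst -` T"
    then obtain t s where x: "x = (t, s)" "t \<in> T" "x \<in> C" by (cases x) auto
    then obtain r where r: "r \<in> Z" "s = \<rho> r t" using fibre[OF x(2)] by auto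
    then have "x \<in> C \<inter> (T \<times> B r)" using x in_B[OF r(1) x(2)] by simp
    then show "x \<in> \<Union>?v" using r(1) by blast
  qed auto
  show "\<forall>u\<in>?v. openin (top_of_set C) u"
    using T B by (auto intro!: openin_open_Int open_Times)
  show "pairwise disjnt ?v"
    using disjoint by (intro pairwise_imageI) (auto simp: disjnt_def)
  show "\<forall>u\<in>?v. \<exists>q. homeomorphism u T fst q"
  proof
    fix u assume "u \<in> ?v"
    then obtain r where r: "r \<in> Z" and u: "u = (\<lambda>t. (t, \<rho> r t)) ` T" by (auto simp: sheet)
    have "homeomorphism u T fst (\<lambda>t. (t, \<rho> r t))"
      unfolding u by (rule homeomorphismI) (auto intro!: continuous_intros cont[OF r])
    then show "\<exists>q. homeomorphism u T fst q" by blast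
  qed
qed

lemma covering_space_roots:
  assumes p: "0 < degree R" and S: "open S" and nondeg: "\<And>z. z \<in> S \<Longrightarrow> nondegenerate_at R z"
  shows "covering_space {(z, s). z \<in> S \<and> poly (partial_eval R z) s = 0} fst S"
    (is "covering_space ?C fst S")
proof
  show "continuous_on ?C fst" by (intro continuous_intros)
  show "fst ` ?C = S"
  proof
    show "S \<subseteq> fst ` ?C"
    proof
      fix z assume z: "z \<in> S"
      have "card {s. poly (partial_eval R z) s = 0} \<noteq> 0"
        using card_roots_partial_eval(2)[OF nondeg[OF z] p] p by simp
      then obtain s where "poly (partial_eval R z) s = 0" by fastforce
      then show "z \<in> fst ` ?C" using z by (intro image_eqI[of _ _ "(z, s)"]) auto
    qed
  qed auto
  fix z0 assume "z0 \<in> S"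
  define Z where "Z = {s. poly (partial_eval R z0) s = 0}"
  obtain \<delta> \<epsilon> \<rho> where \<delta>: "0 < \<delta>" "ball z0 \<delta> \<subseteq> S"
    and disjoint: "\<And>r r'. r \<in> Z \<Longrightarrow> r' \<in> Z \<Longrightarrow> r \<noteq> r' \<Longrightarrow> ball r \<epsilon> \<inter> ball r' \<epsilon> = {}"
    and \<rho>_cont: "\<And>r. r \<in> Z \<Longrightarrow> continuous_on (ball z0 \<delta>) (\<rho> r)"
    and \<rho>_ball: "\<And>r t. r \<in> Z \<Longrightarrow> t \<in> ball z0 \<delta> \<Longrightarrow> \<rho> r t \<in> ball r \<epsilon>"
    and fibre: "\<And>t. t \<in> ball z0 \<delta> \<Longrightarrow> {s. poly (partial_eval R t) s = 0} = (\<lambda>r. \<rho> r t) ` Z"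
    using local_root_branches[OF p S \<open>z0 \<in> S\<close> nondeg, folded Z_def] by metis
  have graph_fibre: "{s. (t, s) \<in> ?C} = (\<lambda>r. \<rho> r t) ` Z" if "t \<in> ball z0 \<delta>" for t
    using fibre[OF that] \<delta>(2) that by auto
  have "\<exists>v. \<Union>v = ?C \<inter> fst -` ball z0 \<delta> \<and> (\<forall>u\<in>v. openin (top_of_set ?C) u) \<and>
      pairwise disjnt v \<and> (\<forall>u\<in>v. \<exists>q. homeomorphism u (ball z0 \<delta>) fst q)"
    using evenly_covered_by_graphs[where B="\<lambda>r. ball r \<epsilon>",
        OF open_ball open_ball disjoint \<rho>_cont \<rho>_ball graph_fibre] by blast
  moreover have "z0 \<in> ball z0 \<delta>" "openin (top_of_set S) (ball z0 \<delta>)"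
    using \<delta> by (auto intro: open_subset)
  ultimately show "\<exists>T. z0 \<in> T \<and> openin (top_of_set S) T \<and>
      (\<exists>v. \<Union>v = ?C \<inter> fst -` T \<and> (\<forall>u\<in>v. openin (top_of_set ?C) u) \<and>
           pairwise disjnt v \<and> (\<forall>u\<in>v. \<exists>q. homeomorphism u T fst q))"
    by blast
qed

lemma covering_space_section:
  fixes p :: "'a::real_normed_vector \<Rightarrow> 'b::real_normed_vector"
  assumes cover: "covering_space C p U" and U: "simply_connected U" "locally path_connected U"
    and a: "a \<in> C"
  obtains g where "continuous_on U g" "g \<in> U \<rightarrow> C" "g (p a) = a" "\<forall>z\<in>U. p (g z) = z"
proof -
  have "p a \<in> U" using covering_space_imp_surjective[OF cover] a by blast
  then obtain g where g: "continuous_on U g" "g \<in> U \<rightarrow> C" "g (p a) = a"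
    and lift_id: "\<And>z. z \<in> U \<Longrightarrow> p (g z) = id z"
    by (rule covering_space_lift_strong[OF cover a _ U continuous_on_id]) auto
  have "\<forall>z\<in>U. p (g z) = z" using lift_id by simp
  with g show ?thesis by (rule that)
qed

lemma covering_space_sections_through_fibre:
  fixes p :: "'a::real_normed_vector \<Rightarrow> 'b::real_normed_vector"
  assumes cover: "covering_space C p U" and U: "simply_connected U" "locally path_connected U"
    and a: "a \<in> K \<rightarrow> C" "inj_on a K" and fibre: "\<And>k. k \<in> K \<Longrightarrow> p (a k) = z0"
  obtains g where "\<forall>k\<in>K. continuous_on U (g k) \<and> g k \<in> U \<rightarrow> C \<and> g k z0 = a k \<and> (\<forall>z\<in>U. p (g k z) = z)"
    "\<forall>z\<in>U. inj_on (\<lambda>k. g k z) K"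
proof -
  have "\<forall>k\<in>K. \<exists>g. continuous_on U g \<and> g \<in> U \<rightarrow> C \<and> g z0 = a k \<and> (\<forall>z\<in>U. p (g z) = z)"
  proof
    fix k assume k: "k \<in> K"
    have "a k \<in> C" using a(1) k by (rule funcset_mem)
    then obtain g where "continuous_on U g" "g \<in> U \<rightarrow> C" "g (p (a k)) = a k" "\<forall>z\<in>U. p (g z) = z"
      by (rule covering_space_section[OF cover U])
    then show "\<exists>g. continuous_on U g \<and> g \<in> U \<rightarrow> C \<and> g z0 = a k \<and> (\<forall>z\<in>U. p (g z) = z)"
      using fibre[OF k] by auto
  qed
  then obtain g where g: "\<forall>k\<in>K. continuous_on U (g k) \<and> g k \<in> U \<rightarrow> C \<and> g k z0 = a k \<and>
      (\<forall>z\<in>U. p (g k z) = z)"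
    by (rule bchoice[THEN exE])
  have "\<forall>z\<in>U. inj_on (\<lambda>k. g k z) K"
  proof (intro ballI inj_onI)
    fix z j k assume z: "z \<in> U" and jk: "j \<in> K" "k \<in> K" and eq: "g j z = g k z"
    have z0: "z0 \<in> U"
      using covering_space_imp_surjective[OF cover] funcset_mem[OF a(1) jk(1)] fibre[OF jk(1)] by blast
    from g jk have gj: "continuous_on U (g j)" "g j \<in> U \<rightarrow> C" "\<forall>z\<in>U. p (g j z) = z"
      and gk: "continuous_on U (g k)" "g k \<in> U \<rightarrow> C" "\<forall>z\<in>U. p (g k z) = z"
      by auto
    from covering_space_lift_unique[OF cover eq continuous_on_id _ gj(1,2) _ gk(1,2) _
        simply_connected_imp_connected[OF U(1)] z z0]
    have "g j z0 = g k z0" using gj(3) gk(3) by auto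
    then have "a j = a k" using g jk by auto
    then show "j = k" by (rule inj_onD[OF a(2) _ jk])
  qed
  with g show ?thesis by (rule that)
qed

lemma covering_space_fst_branches:
  fixes C :: "('a::real_normed_vector \<times> 'b::real_normed_vector) set"
  assumes cover: "covering_space C fst U" and U: "simply_connected U" "locally path_connected U"
    and \<rho>: "\<forall>k\<in>K. (z0, \<rho> k) \<in> C" "inj_on \<rho> K"
  obtains \<psi> where "\<forall>k\<in>K. continuous_on U (\<psi> k)" "\<forall>k\<in>K. \<forall>z\<in>U. (z, \<psi> k z) \<in> C"
    "\<forall>z\<in>U. inj_on (\<lambda>k. \<psi> k z) K"
proof -
  have a_in: "(\<lambda>k. (z0, \<rho> k)) \<in> K \<rightarrow> C" using \<rho>(1) by blast
  have a_inj: "inj_on (\<lambda>k. (z0, \<rho> k)) K"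
  proof (rule inj_onI)
    fix j k assume jk: "j \<in> K" "k \<in> K" and "(z0, \<rho> j) = (z0, \<rho> k)"
    then have "\<rho> j = \<rho> k" by simp
    then show "j = k" using jk by (rule inj_onD[OF \<rho>(2)])
  qed
  obtain g where g: "\<forall>k\<in>K. continuous_on U (g k) \<and> g k \<in> U \<rightarrow> C \<and>
      g k z0 = (z0, \<rho> k) \<and> (\<forall>z\<in>U. fst (g k z) = z)"
    and g_inj: "\<forall>z\<in>U. inj_on (\<lambda>k. g k z) K"
    by (rule covering_space_sections_through_fibre[OF cover U a_in a_inj]) simp
  from g have g_cont: "\<And>k. k \<in> K \<Longrightarrow> continuous_on U (g k)"
    and g_in: "\<And>k. k \<in> K \<Longrightarrow> g k \<in> U \<rightarrow> C"
    and g_fst: "\<And>k z. k \<in> K \<Longrightarrow> z \<in> U \<Longrightarrow> fst (g k z) = z"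
    by auto
  have g_eq: "g k z = (z, snd (g k z))" if "k \<in> K" "z \<in> U" for k z
    using g_fst[OF that] by (simp add: prod_eq_iff)
  show ?thesis
  proof (rule that; intro ballI)
    show "continuous_on U (\<lambda>z. snd (g k z))" if "k \<in> K" for k
      by (intro continuous_intros g_cont that)
    show "(z, snd (g k z)) \<in> C" if "k \<in> K" "z \<in> U" for k z
      using funcset_mem[OF g_in[OF that(1)] that(2)] g_eq[OF that] by simp
    show "inj_on (\<lambda>k. snd (g k z)) K" if z: "z \<in> U" for z
    proof (rule inj_onI)
      fix j k assume jk: "j \<in> K" "k \<in> K" and "snd (g j z) = snd (g k z)"
      then have "g j z = g k z" using g_eq[OF jk(1) z] g_eq[OF jk(2) z] by metis
      then show "j = k" using jk by (rule inj_onD[OF g_inj[rule_format, OF z]])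
    qed
  qed
qed

lemma holomorphic_root_branches:
  assumes p: "0 < degree R" and U: "open U" "convex U" "z0 \<in> U"
    and nondeg: "\<And>z. z \<in> U \<Longrightarrow> nondegenerate_at R z"
  obtains \<psi> where "\<forall>k\<in>{1..degree R}. \<psi> k holomorphic_on U"
    "\<forall>z\<in>U. inj_on (\<lambda>k. \<psi> k z) {1..degree R}"
    "\<forall>z\<in>U. {s. poly (partial_eval R z) s = 0} = (\<lambda>k. \<psi> k z) ` {1..degree R}"
proof -
  let ?C = "{(z, s). z \<in> U \<and> poly (partial_eval R z) s = 0}"
  have cover: "covering_space ?C fst U" by (rule covering_space_roots[OF p U(1) nondeg])
  have simply_connected: "simply_connected U" and lpc: "locally path_connected U"
    using U by (simp_all add: convex_imp_simply_connected open_imp_locally_path_connected)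
  obtain \<rho> where \<rho>: "bij_betw \<rho> {1..degree R} {s. poly (partial_eval R z0) s = 0}"
    using ex_bij_betw_nat_finite_1[OF card_roots_partial_eval(1)[OF nondeg[OF U(3)] p]]
    unfolding card_roots_partial_eval(2)[OF nondeg[OF U(3)] p] by blast
  have "\<forall>k\<in>{1..degree R}. (z0, \<rho> k) \<in> ?C" using bij_betwE[OF \<rho>] U(3) by blast
  then obtain \<psi> where cont: "\<forall>k\<in>{1..degree R}. continuous_on U (\<psi> k)"
    and graph: "\<forall>k\<in>{1..degree R}. \<forall>z\<in>U. (z, \<psi> k z) \<in> ?C"
    and inj: "\<forall>z\<in>U. inj_on (\<lambda>k. \<psi> k z) {1..degree R}"
    by (rule covering_space_fst_branches[OF cover simply_connected lpc _ bij_betw_imp_inj_on[OF \<rho>]])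
  have root: "poly (partial_eval R z) (\<psi> k z) = 0" if "k \<in> {1..degree R}" "z \<in> U" for k z
    using graph that by blast
  show ?thesis
  proof (rule that[OF _ inj]; intro ballI)
    fix k assume k: "k \<in> {1..degree R}"
    show "\<psi> k holomorphic_on U"
    proof (rule holomorphic_on_continuous_root[OF U(1)])
      show "continuous_on U (\<psi> k)" using cont k by blast
      show "\<And>z. z \<in> U \<Longrightarrow> poly (partial_eval R z) (\<psi> k z) = 0" using root k by blast
      show "poly (pderiv (partial_eval R z)) (\<psi> k z) \<noteq> 0" if "z \<in> U" for z
        using nondeg[OF that] root[OF k that] by (auto simp: nondegenerate_at_def rsquarefree_roots)
    qed
  next
    fix z assume z: "z \<in> U"
    show "{s. poly (partial_eval R z) s = 0} = (\<lambda>k. \<psi> k z) ` {1..degree R}"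
      using root z inj by (intro roots_partial_eval_eq_image[OF nondeg[OF z] p]) auto
  qed
qed

lemma open_convex_nbhd_avoiding_finite:
  fixes I :: "real set" and Z :: "complex set"
  assumes I: "open I" "is_interval I" and Z: "finite Z"
    and real_avoid: "\<And>x. x \<in> I \<Longrightarrow> complex_of_real x \<notin> Z"
  obtains U where "open U" "convex U" "complex_of_real ` I \<subseteq> U" "U \<inter> Z = {}"
proof -
  obtain \<eta> where \<eta>: "0 < \<eta>" "\<And>w. w \<in> Z \<Longrightarrow> Im w \<noteq> 0 \<Longrightarrow> \<eta> \<le> \<bar>Im w\<bar>"
    using finite_set_avoid[where a=0 and S="Im ` Z"] Z by (auto simp: dist_real_def)
  define U where "U = Re -` I \<inter> Im -` {-\<eta><..<\<eta>}"
  show ?thesis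
  proof (rule that)
    show "open U"
      unfolding U_def by (intro open_Int open_vimage I(1)) (auto intro!: continuous_intros)
    show "convex U"
      unfolding U_def using I(2)
      by (intro convex_Int convex_linear_vimage) (auto simp: is_interval_convex bounded_linear_Re bounded_linear_Im bounded_linear.linear)
    show "complex_of_real ` I \<subseteq> U" using \<eta> by (auto simp: U_def)
    show "U \<inter> Z = {}"
    proof safe
      fix w assume w: "w \<in> U" "w \<in> Z"
      show "w \<in> {}"
      proof (cases "Im w = 0")
        case True
        then have "complex_of_real (Re w) = w" by (simp add: complex_eq_iff)
        then show ?thesis using real_avoid[of "Re w"] w by (auto simp: U_def)
      next
        case False
        then show ?thesis using \<eta>(2)[OF w(2)] w(1) by (auto simp: U_def abs_less_iff)
      qed
    qed
  qed
qed

lemma convex_nbhd_of_interval_nondegenerate: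
  assumes p: "0 < degree R" and I: "open I" "is_interval I" "t0 \<in> I"
    and disc: "\<And>t. t \<in> I \<Longrightarrow> poly (disc R) t \<noteq> 0"
  obtains U where "open U" "convex U" "complex_of_real ` I \<subseteq> U" "\<forall>z\<in>U. nondegenerate_at R z"
proof -
  define D where "D = map_poly complex_of_real (disc R)"
  have D_real: "poly D (complex_of_real t) \<noteq> 0" if "t \<in> I" for t
    using disc[OF that] by (simp add: D_def of_real_hom.poly_map_poly)
  then have "D \<noteq> 0" using I(3) by auto
  obtain U where U: "open U" "convex U" "complex_of_real ` I \<subseteq> U" "U \<inter> {z. poly D z = 0} = {}"
    using open_convex_nbhd_avoiding_finite[OF I(1,2) poly_roots_finite[OF \<open>D \<noteq> 0\<close>]] D_real
    by blast
  have "\<forall>z\<in>U. nondegenerate_at R z"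
    using nondegenerate_atI[OF p] U(4) by (auto simp: D_def disc_def)
  with U(1-3) show ?thesis by (rule that)
qed

lemma zero_set_eq_graphs_of_branches:
  fixes \<psi> :: "'k \<Rightarrow> complex \<Rightarrow> complex"
  assumes IU: "complex_of_real ` I \<subseteq> U"
    and roots: "\<forall>z\<in>U. {s. poly (partial_eval R z) s = 0} = (\<lambda>k. \<psi> k z) ` K"
  shows "{(t, s). t \<in> I \<and> ev2 (map_poly (map_poly complex_of_real) R) s (complex_of_real t) = 0}
           = {(t, \<psi> k (complex_of_real t)) | t k. t \<in> I \<and> k \<in> K}"
proof -
  have fibre: "ev2 (map_poly (map_poly complex_of_real) R) s (complex_of_real t) = 0 \<longleftrightarrow>
      (\<exists>k\<in>K. s = \<psi> k (complex_of_real t))" if "t \<in> I" for t s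
  proof -
    have "complex_of_real t \<in> U" using that IU by blast
    with roots have "poly (partial_eval R (complex_of_real t)) s = 0 \<longleftrightarrow>
        s \<in> (\<lambda>k. \<psi> k (complex_of_real t)) ` K"
      by blast
    then show ?thesis by (simp add: ev2_map_of_real_eq_poly_partial_eval image_iff)
  qed
  show ?thesis
  proof (intro equalityI subsetI)
    fix x assume "x \<in> {(t, s). t \<in> I \<and>
        ev2 (map_poly (map_poly complex_of_real) R) s (complex_of_real t) = 0}"
    then obtain t s where x: "x = (t, s)" "t \<in> I"
      and "ev2 (map_poly (map_poly complex_of_real) R) s (complex_of_real t) = 0" by blast
    then obtain k where "k \<in> K" "s = \<psi> k (complex_of_real t)" using fibre by blast
    then show "x \<in> {(t, \<psi> k (complex_of_real t)) | t k. t \<in> I \<and> k \<in> K}"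
      using x by blast
  next
    fix x assume "x \<in> {(t, \<psi> k (complex_of_real t)) | t k. t \<in> I \<and> k \<in> K}"
    then obtain t k where x: "x = (t, \<psi> k (complex_of_real t))" "t \<in> I" "k \<in> K"
      by blast
    then show "x \<in> {(t, s). t \<in> I \<and>
        ev2 (map_poly (map_poly complex_of_real) R) s (complex_of_real t) = 0}"
      using fibre[OF x(2), of "\<psi> k (complex_of_real t)"] by blast
  qed
qed

theorem lemma17:
  fixes F :: "real poly poly poly poly"    \<comment> \<open>F with variable order y, x, t, s\<close>
    and Fs :: "real poly poly poly poly"   \<comment> \<open>the same F with variable order s, y, x, t\<close>
    and M :: "real poly poly poly"         \<comment> \<open>variable order x, t, s\<close>
    and Rts :: "real poly poly"            \<comment> \<open>R with variable order t, s\<close>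
    and R :: "real poly poly"              \<comment> \<open>the same R with variable order s, t\<close>
    and Gt :: "real poly poly poly"        \<comment> \<open>tilde G, variable order y, x, t\<close>
    and G :: "real poly poly poly"         \<comment> \<open>variable order y, x, t\<close>
    and c :: "real poly"
    and C I :: "real set"
  assumes F_sqfree: "squarefree F"
    and F_no_ts_factor: "\<forall>h :: real poly poly. [:[:h:]:] dvd F \<longrightarrow> is_unit h"
    and F_lc: "degree (lead_coeff F) = 0"
    and Fs_F: "\<forall>x y t s. ev4 Fs s y x t = ev4 F y x t s"
    and M_def: "is_sqfree_part M (disc F)"
    and Rts_def: "is_sqfree_part Rts (disc M)"
    and R_Rts: "\<forall>t s. ev2 R s t = ev2 Rts t s"
    and R_nonzero: "R \<noteq> 0"
    and R_dep_s: "degree R > 0"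
    and R_dep_t: "\<exists>i. degree (coeff R i) > 0"
    and Gt_def: "is_sqfree_part Gt
                   (resultant Fs (map_poly (\<lambda>a. [:[:a:]:]) R))"
    and G_def: "Gt = [:[:c:]:] * G"
    and G_no_t_factor: "\<forall>h :: real poly. [:[:h:]:] dvd G \<longrightarrow> is_unit h"
    and G_lc: "degree (lead_coeff G) = 0"
    and C_crit: "critical_set G C"
    and I_open: "open I" and I_interval: "is_interval I"
    and I_disj: "I \<inter> ({t. poly (disc R) t = 0} \<union> C) = {}"
  shows "\<exists>(\<psi> :: nat \<Rightarrow> complex \<Rightarrow> complex) U.
           open U \<and> complex_of_real ` I \<subseteq> U \<and>
           (\<forall>k \<in> {1..degree R}. \<psi> k analytic_on U) \<and>
           (\<forall>j \<in> {1..degree R}. \<forall>k \<in> {1..degree R}. j \<noteq> k \<longrightarrow> (\<exists>z \<in> U. \<psi> j z \<noteq> \<psi> k z)) \<and>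
           {(t, s). t \<in> I \<and> ev2 (map_poly (map_poly complex_of_real) R) s (complex_of_real t) = 0}
             = {(t, \<psi> k (complex_of_real t)) | t k. t \<in> I \<and> k \<in> {1..degree R}}"
proof (cases "I = {}")
  case True
  show ?thesis
    by (rule exI[of _ "\<lambda>k z. of_nat k"], rule exI[of _ UNIV]) (use True in auto)
next
  case False
  then obtain t0 where t0: "t0 \<in> I" by blast
  have disc: "poly (disc R) t \<noteq> 0" if "t \<in> I" for t using I_disj that by blast
  obtain U where U: "open U" "convex U" "complex_of_real ` I \<subseteq> U"
    and nondeg: "\<forall>z\<in>U. nondegenerate_at R z"
    by (rule convex_nbhd_of_interval_nondegenerate[OF R_dep_s I_open I_interval t0 disc])
  have z0: "complex_of_real t0 \<in> U" using t0 U(3) by blast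
  obtain \<psi> where hol: "\<forall>k\<in>{1..degree R}. \<psi> k holomorphic_on U"
    and inj: "\<forall>z\<in>U. inj_on (\<lambda>k. \<psi> k z) {1..degree R}"
    and roots: "\<forall>z\<in>U. {s. poly (partial_eval R z) s = 0} = (\<lambda>k. \<psi> k z) ` {1..degree R}"
    using holomorphic_root_branches[OF R_dep_s U(1,2) z0] nondeg by blast
  show ?thesis
  proof (rule exI[of _ \<psi>], rule exI[of _ U], intro conjI ballI impI)
    show "\<psi> k analytic_on U" if "k \<in> {1..degree R}" for k
      using hol that U(1) by (simp add: analytic_on_open)
    show "\<exists>z\<in>U. \<psi> j z \<noteq> \<psi> k z" if "j \<in> {1..degree R}" "k \<in> {1..degree R}" "j \<noteq> k" for j k
      using inj_onD[OF inj[rule_format, OF z0] _ that(1,2)] that(3) z0 by blast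
  qed (use U zero_set_eq_graphs_of_branches[OF U(3) roots] in auto)
qed

end
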